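(* Suppose $N>n$ and let $(F,G)\in\mathcal R^{(1)}$. Then $r^{(2)}_{F,G}=\frac nN+\sqrt{\frac{n(N-n)}{N^2(N-1)}}$ if and only if $(F,G)$ is $2$-uniform.
   Context: $\mathcal H$ is a complex Hilbert space of finite dimension $n$, inner product linear in the first argument. A finite sequence $F=\{f_i\}_{i=1}^N$ is a frame if there are $0<A\le B$ with $A\|f\|^2\le\sum_i|\langle f,f_i\rangle|^2\le B\|f\|^2$ for all $f$. $G=\{g_i\}_{i=1}^N$ is a dual of $F$ if $f=\sum_i\langle f,g_i\rangle f_i$ for all $f$; $(F,G)$ is then an $(N,n)$ dual pair. A dual pair is $1$-uniform if $\langle f_i,g_i\rangle$ is independent of $i$, and $2$-uniform if it is $1$-uniform and $\langle f_i,g_j\rangle\langle f_j,g_i\rangle$ is the same constant for all $i\ne j$. $\mathcal A_m$ is the set of $m$-element subsets of $\{1,\dots,N\}$; $E_{\Lambda,F,G}f=\sum_{i\in\Lambda}\langle f,f_i\rangle g_i$; $\rho$ is spectral radius; $r^{(m)}_{F,G}=\max_{\Lambda\in\mathcal A_m}\rho(E_{\Lambda,F,G})$; $r^{(1)}=\inf\{r^{(1)}_{F,G}:(F,G)\text{ an }(N,n)\text{ dual pair}\}$; $\mathcal R^{(1)}=\{(F,G):r^{(1)}_{F,G}=r^{(1)}\}$. *)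

theory Defs
  imports "Jordan_Normal_Form.Spectral_Radius"
begin

text \<open>Hilbert space = complex vectors of dimension n (carrier_vec n); inner product
  linear in the first argument.\<close>
definition ip :: "complex vec \<Rightarrow> complex vec \<Rightarrow> complex" where
  "ip f g = (\<Sum>k<dim_vec f. f $ k * cnj (g $ k))"

definition is_frame :: "nat \<Rightarrow> nat \<Rightarrow> (nat \<Rightarrow> complex vec) \<Rightarrow> bool" where
  "is_frame n N F \<longleftrightarrow> (\<forall>i<N. F i \<in> carrier_vec n) \<and>
     (\<exists>A B::real. 0 < A \<and> A \<le> B \<and>
        (\<forall>f\<in>carrier_vec n. A * (cmod (ip f f)) \<le> (\<Sum>i<N. (cmod (ip f (F i)))\<^sup>2) \<and>
                            (\<Sum>i<N. (cmod (ip f (F i)))\<^sup>2) \<le> B * (cmod (ip f f))))"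

definition dual_pair :: "nat \<Rightarrow> nat \<Rightarrow> (nat \<Rightarrow> complex vec) \<Rightarrow> (nat \<Rightarrow> complex vec) \<Rightarrow> bool" where
  "dual_pair n N F G \<longleftrightarrow> is_frame n N F \<and> (\<forall>i<N. G i \<in> carrier_vec n) \<and>
     (\<forall>f\<in>carrier_vec n. f = finsum_vec TYPE(complex) n (\<lambda>i. ip f (G i) \<cdot>\<^sub>v F i) {..<N})"

text \<open>Matrix of E_{\<Lambda>,F,G} f = sum_{i in \<Lambda>} <f,f_i> g_i.\<close>
definition E_op :: "nat \<Rightarrow> nat set \<Rightarrow> (nat \<Rightarrow> complex vec) \<Rightarrow> (nat \<Rightarrow> complex vec) \<Rightarrow> complex mat" where
  "E_op n \<Lambda> F G = mat n n (\<lambda>(j,k). \<Sum>i\<in>\<Lambda>. G i $ j * cnj (F i $ k))"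

definition subsets_m :: "nat \<Rightarrow> nat \<Rightarrow> nat set set" where
  "subsets_m N m = {\<Lambda>. \<Lambda> \<subseteq> {..<N} \<and> card \<Lambda> = m}"

definition r_m :: "nat \<Rightarrow> nat \<Rightarrow> nat \<Rightarrow> (nat \<Rightarrow> complex vec) \<Rightarrow> (nat \<Rightarrow> complex vec) \<Rightarrow> real" where
  "r_m m n N F G = Max ((\<lambda>\<Lambda>. spectral_radius (E_op n \<Lambda> F G)) ` subsets_m N m)"

definition r1_inf :: "nat \<Rightarrow> nat \<Rightarrow> real" where
  "r1_inf n N = Inf {r_m 1 n N F G | F G. dual_pair n N F G}"

definition R1 :: "nat \<Rightarrow> nat \<Rightarrow> ((nat \<Rightarrow> complex vec) \<times> (nat \<Rightarrow> complex vec)) set" where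
  "R1 n N = {(F, G). dual_pair n N F G \<and> r_m 1 n N F G = r1_inf n N}"

definition one_uniform :: "nat \<Rightarrow> (nat \<Rightarrow> complex vec) \<Rightarrow> (nat \<Rightarrow> complex vec) \<Rightarrow> bool" where
  "one_uniform N F G \<longleftrightarrow> (\<exists>c. \<forall>i<N. ip (F i) (G i) = c)"

definition two_uniform :: "nat \<Rightarrow> (nat \<Rightarrow> complex vec) \<Rightarrow> (nat \<Rightarrow> complex vec) \<Rightarrow> bool" where
  "two_uniform N F G \<longleftrightarrow> one_uniform N F G \<and>
     (\<exists>d. \<forall>i<N. \<forall>j<N. i \<noteq> j \<longrightarrow> ip (F i) (G j) * ip (F j) (G i) = d)"

end

theory Submission
  imports Defs
begin

text \<open>Since \<open>\<Sum>\<^sub>i f\<^sub>i g\<^sub>i\<^sup>*\<close> is the identity, its trace gives \<open>\<Sum>\<^sub>i \<langle>f\<^sub>i, g\<^sub>i\<rangle> = n\<close>, so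
  \<open>r\<^sup>(\<^sup>1\<^sup>) \<ge> n/N\<close>. The harmonic frame (the first \<open>n\<close> columns of the unitary DFT matrix)
  attains this bound, hence every pair in \<open>\<R>\<^sup>(\<^sup>1\<^sup>)\<close> has \<open>\<langle>f\<^sub>i, g\<^sub>i\<rangle> = c = n/N\<close> for all \<open>i\<close>.
  The trace of the square of the identity gives \<open>\<Sum>\<^sub>i\<^sub>,\<^sub>j d\<^sub>i\<^sub>j = n\<close> for
  \<open>d\<^sub>i\<^sub>j = \<langle>f\<^sub>i, g\<^sub>j\<rangle>\<langle>f\<^sub>j, g\<^sub>i\<rangle>\<close>, so the off-diagonal \<open>d\<^sub>i\<^sub>j\<close> average
  \<open>t\<^sup>2 = n(N - n)/(N\<^sup>2(N - 1))\<close>. The nonzero eigenvalues of \<open>E\<^sub>{\<^sub>i\<^sub>,\<^sub>j\<^sub>}\<close> are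
  \<open>c \<plusminus> s\<close> with \<open>s\<^sup>2 = conj d\<^sub>i\<^sub>j\<close>, and \<open>max |c \<plusminus> s| \<le> c + t\<close> forces \<open>Re d\<^sub>i\<^sub>j \<le> t\<^sup>2\<close>,
  with equality only if \<open>d\<^sub>i\<^sub>j = t\<^sup>2\<close>. Comparing with the average, \<open>r\<^sup>(\<^sup>2\<^sup>) = c + t\<close> holds
  exactly when all off-diagonal \<open>d\<^sub>i\<^sub>j\<close> equal \<open>t\<^sup>2\<close>.\<close>

lemma sum_eq_card_mult_bound_imp_eq:
  fixes f :: "'a \<Rightarrow> real"
  assumes "finite A" and "\<And>y. y \<in> A \<Longrightarrow> f y \<le> b" and "sum f A = real (card A) * b"
    and "x \<in> A"
  shows "f x = b"
proof -
  have "(\<Sum>y\<in>A. b - f y) = 0" using assms(3) by (simp add: sum_subtractf)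
  hence "\<forall>y\<in>A. b - f y = 0" using assms(1,2) by (subst (asm) sum_nonneg_eq_0_iff) auto
  thus ?thesis using assms(4) by simp
qed

lemma complex_eq_of_real_if_Re_eq_norm_le:
  assumes "Re z = c" and "cmod z \<le> c"
  shows "z = complex_of_real c"
proof -
  have "(Re z)\<^sup>2 + (Im z)\<^sup>2 = (cmod z)\<^sup>2" by (simp add: cmod_power2)
  also have "\<dots> \<le> c\<^sup>2" using assms(2) by (simp add: power_mono)
  finally have "Im z = 0" using assms(1) by simp
  thus ?thesis using assms(1) by (simp add: complex_eq_iff)
qed

lemma Re_sq_le_if_max_norm_add_diff_le:
  fixes c t :: real and s :: complex
  assumes c: "0 < c" and t: "0 \<le> t"
    and bound: "max (cmod (of_real c + s)) (cmod (of_real c - s)) \<le> c + t"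
  shows "Re (s\<^sup>2) \<le> t\<^sup>2" and "Re (s\<^sup>2) = t\<^sup>2 \<Longrightarrow> s\<^sup>2 = of_real (t\<^sup>2)"
proof -
  define a b where "a = Re s" and "b = Im s"
  have "(cmod (of_real c + s))\<^sup>2 \<le> (c + t)\<^sup>2" "(cmod (of_real c - s))\<^sup>2 \<le> (c + t)\<^sup>2"
    using bound by (auto intro!: power_mono)
  hence sq: "(c + a)\<^sup>2 + b\<^sup>2 \<le> (c + t)\<^sup>2" "(c - a)\<^sup>2 + b\<^sup>2 \<le> (c + t)\<^sup>2"
    by (simp_all add: cmod_power2 a_def b_def)
  have "\<bar>a\<bar> \<le> t"
  proof (cases "a \<ge> 0")
    case True
    have "(c + a)\<^sup>2 \<le> (c + t)\<^sup>2" using sq(1) zero_le_power2[of b] by linarith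
    thus ?thesis using True c t power2_le_imp_le[of "c + a" "c + t"] by simp
  next
    case False
    have "(c - a)\<^sup>2 \<le> (c + t)\<^sup>2" using sq(2) zero_le_power2[of b] by linarith
    thus ?thesis using False c t power2_le_imp_le[of "c - a" "c + t"] by simp
  qed
  hence a_sq: "a\<^sup>2 \<le> t\<^sup>2" using power_mono[of "\<bar>a\<bar>" t 2] by simp
  have Re_sq: "Re (s\<^sup>2) = a\<^sup>2 - b\<^sup>2" and Im_sq: "Im (s\<^sup>2) = 2 * a * b"
    by (simp_all add: power2_eq_square a_def b_def)
  show "Re (s\<^sup>2) \<le> t\<^sup>2" using Re_sq a_sq zero_le_power2[of b] by linarith
  assume "Re (s\<^sup>2) = t\<^sup>2"
  hence "b\<^sup>2 = 0" using Re_sq a_sq zero_le_power2[of b] by linarith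
  hence "b = 0" by simp
  thus "s\<^sup>2 = of_real (t\<^sup>2)" using Im_sq \<open>Re (s\<^sup>2) = t\<^sup>2\<close> by (simp add: complex_eq_iff)
qed

lemma max_norm_add_diff_of_real:
  fixes c t :: real
  assumes "0 < c" and "0 \<le> t"
  shows "max (cmod (of_real c + of_real t)) (cmod (of_real c - of_real t)) = c + t"
proof -
  have "cmod (of_real c + of_real t) = c + t" using assms
    by (metis abs_of_nonneg add_nonneg_nonneg less_imp_le norm_of_real of_real_add)
  moreover have "cmod (of_real c - of_real t) = \<bar>c - t\<bar>" by (metis norm_of_real of_real_diff)
  ultimately show ?thesis using assms by auto
qed


subsection \<open>The harmonic frame\<close>

lemma sum_cis_roots_of_unity_eq_0:
  assumes m: "m \<noteq> 0" "\<bar>m\<bar> < int N"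
  shows "(\<Sum>i<N. cis (2 * pi * real i * of_int m / real N)) = 0"
proof -
  have N: "N > 0" using m by linarith
  define z where "z = cis (2 * pi * of_int m / real N)"
  have powers: "cis (2 * pi * real i * of_int m / real N) = z ^ i" for i
    unfolding z_def DeMoivre by (simp add: algebra_simps)
  have "z \<noteq> 1"
  proof
    assume "z = 1"
    hence "cos (2 * pi * of_int m / real N) = 1" unfolding z_def by (metis cis.sel(1) one_complex.sel(1))
    then obtain k :: int where "2 * pi * of_int m / real N = real_of_int k * 2 * pi"
      using cos_one_2pi_int by blast
    hence "real_of_int m = real_of_int k * real N" using N by (simp add: field_simps)
    hence "m = k * int N" by (metis of_int_eq_iff of_int_mult of_int_of_nat_eq)
    moreover from this have "1 \<le> \<bar>k\<bar>" using m by auto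
    ultimately have "int N \<le> \<bar>m\<bar>" using mult_right_mono[of 1 "\<bar>k\<bar>" "int N"] by (simp add: abs_mult)
    thus False using m by simp
  qed
  moreover have "z ^ N = 1" unfolding z_def DeMoivre using N by simp
  ultimately show ?thesis unfolding powers using geometric_sum[of z N] by simp
qed

definition dft_entry :: "nat \<Rightarrow> nat \<Rightarrow> nat \<Rightarrow> complex" where
  "dft_entry N i k = cis (2 * pi * real i * real k / real N) / complex_of_real (sqrt (real N))"

definition harmonic_frame :: "nat \<Rightarrow> nat \<Rightarrow> nat \<Rightarrow> complex vec" where
  "harmonic_frame n N i = vec n (dft_entry N i)"

lemma of_real_sqrt_of_nat_sq: "(complex_of_real (sqrt (real N)))\<^sup>2 = of_nat N"
  by (metis of_real_power of_real_of_nat_eq of_nat_0_le_iff real_sqrt_pow2)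

lemma dft_columns_orthonormal:
  assumes k: "k < N" and l: "l < N"
  shows "(\<Sum>i<N. dft_entry N i l * cnj (dft_entry N i k)) = (if l = k then 1 else 0)"
proof -
  have N: "N > 0" using k by auto
  have "dft_entry N i l * cnj (dft_entry N i k)
          = cis (2 * pi * real i * of_int (int l - int k) / real N) / of_nat N" for i
  proof -
    have "dft_entry N i l * cnj (dft_entry N i k)
          = cis (2 * pi * real i * real l / real N) * cis (- (2 * pi * real i * real k / real N))
            / (complex_of_real (sqrt (real N)))\<^sup>2"
      unfolding dft_entry_def by (simp add: cis_cnj power2_eq_square)
    thus ?thesis
      unfolding of_real_sqrt_of_nat_sq by (simp add: cis_mult diff_divide_distrib algebra_simps)
  qed
  hence "(\<Sum>i<N. dft_entry N i l * cnj (dft_entry N i k))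
          = (\<Sum>i<N. cis (2 * pi * real i * of_int (int l - int k) / real N)) / of_nat N"
    by (simp add: sum_divide_distrib)
  also have "\<dots> = (if l = k then 1 else 0)"
    using N sum_cis_roots_of_unity_eq_0[of "int l - int k" N] k l by auto
  finally show ?thesis .
qed

lemma index_finsum_vec_smult:
  fixes P :: "nat \<Rightarrow> complex vec"
  assumes "\<And>i. i < N \<Longrightarrow> P i \<in> carrier_vec n" and "k < n"
  shows "finsum_vec TYPE(complex) n (\<lambda>i. a i \<cdot>\<^sub>v P i) {..<N} $ k = (\<Sum>i<N. a i * P i $ k)"
proof -
  have "finsum_vec TYPE(complex) n (\<lambda>i. a i \<cdot>\<^sub>v P i) {..<N} $ k = (\<Sum>i<N. (a i \<cdot>\<^sub>v P i) $ k)"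
    by (rule index_finsum_vec) (use assms in auto)
  also have "\<dots> = (\<Sum>i<N. a i * P i $ k)"
    by (intro sum.cong refl) (simp add: assms(2) carrier_vecD[OF assms(1)])
  finally show ?thesis .
qed

lemma dim_finsum_vec_smult:
  fixes P :: "nat \<Rightarrow> complex vec"
  shows "(\<And>i. i < N \<Longrightarrow> P i \<in> carrier_vec n) \<Longrightarrow> dim_vec (finsum_vec TYPE(complex) n (\<lambda>i. a i \<cdot>\<^sub>v P i) {..<N}) = n"
  by (rule carrier_vecD, rule finsum_vec_closed) auto

lemma orthonormal_columns_reconstruction:
  fixes P :: "nat \<Rightarrow> complex vec"
  assumes orthonormal: "\<And>k l. k < n \<Longrightarrow> l < n \<Longrightarrow>
      (\<Sum>i<N. P i $ l * cnj (P i $ k)) = (if l = k then 1 else 0)"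
    and f: "f \<in> carrier_vec n" and k: "k < n"
  shows "(\<Sum>i<N. ip f (P i) * P i $ k) = f $ k"
proof -
  have "(\<Sum>i<N. ip f (P i) * P i $ k) = (\<Sum>i<N. \<Sum>l<n. f $ l * (P i $ k * cnj (P i $ l)))"
    using f by (intro sum.cong refl) (simp add: ip_def sum_distrib_right sum_distrib_left algebra_simps)
  also have "\<dots> = (\<Sum>l<n. f $ l * (\<Sum>i<N. P i $ k * cnj (P i $ l)))"
    by (subst sum.swap) (simp add: sum_distrib_left)
  also have "\<dots> = (\<Sum>l<n. if l = k then f $ l else 0)"
    by (intro sum.cong refl) (simp add: orthonormal k)
  also have "\<dots> = f $ k" using k by (simp add: sum.delta)
  finally show ?thesis .
qed

lemma self_dual_pairI:
  fixes P :: "nat \<Rightarrow> complex vec"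
  assumes carrier: "\<And>i. i < N \<Longrightarrow> P i \<in> carrier_vec n"
    and orthonormal: "\<And>k l. k < n \<Longrightarrow> l < n \<Longrightarrow>
      (\<Sum>i<N. P i $ l * cnj (P i $ k)) = (if l = k then 1 else 0)"
  shows "dual_pair n N P P"
proof -
  have reconstruction: "(\<Sum>i<N. ip f (P i) * P i $ k) = f $ k" if "f \<in> carrier_vec n" "k < n" for f k
    by (rule orthonormal_columns_reconstruction[OF orthonormal]) (use that in simp_all)
  have dual: "f = finsum_vec TYPE(complex) n (\<lambda>i. ip f (P i) \<cdot>\<^sub>v P i) {..<N}"
    if f: "f \<in> carrier_vec n" for f
    by (intro eq_vecI) (simp_all add: carrier_vecD[OF f] dim_finsum_vec_smult[OF carrier]
        index_finsum_vec_smult[OF carrier] reconstruction[OF f])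
  have parseval: "(\<Sum>i<N. (cmod (ip f (P i)))\<^sup>2) = cmod (ip f f)" if f: "f \<in> carrier_vec n" for f
  proof -
    have "complex_of_real (\<Sum>i<N. (cmod (ip f (P i)))\<^sup>2) = (\<Sum>i<N. ip f (P i) * cnj (ip f (P i)))"
      by (simp only: of_real_sum complex_norm_square)
    also have "\<dots> = (\<Sum>i<N. \<Sum>k<n. f $ k * cnj (P i $ k) * cnj (ip f (P i)))"
      using f by (intro sum.cong refl) (simp add: ip_def sum_distrib_right)
    also have "\<dots> = (\<Sum>k<n. \<Sum>i<N. f $ k * cnj (ip f (P i) * P i $ k))"
      by (subst sum.swap) (simp add: algebra_simps)
    also have "\<dots> = (\<Sum>k<n. f $ k * cnj (\<Sum>i<N. ip f (P i) * P i $ k))"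
      by (simp add: sum_distrib_left)
    also have "\<dots> = (\<Sum>k<n. f $ k * cnj (f $ k))" by (intro sum.cong refl) (simp add: reconstruction[OF f])
    also have "\<dots> = ip f f" using f by (simp add: ip_def)
    finally have "complex_of_real (\<Sum>i<N. (cmod (ip f (P i)))\<^sup>2) = ip f f" .
    hence "cmod (ip f f) = \<bar>\<Sum>i<N. (cmod (ip f (P i)))\<^sup>2\<bar>" by (metis norm_of_real)
    thus ?thesis by (simp add: sum_nonneg)
  qed
  show ?thesis unfolding dual_pair_def is_frame_def
    using carrier dual parseval by (auto intro!: exI[of _ "1::real"])
qed

lemma harmonic_frame_dual_pair:
  assumes "n \<le> N"
  shows "dual_pair n N (harmonic_frame n N) (harmonic_frame n N)"
  by (rule self_dual_pairI) (use assms dft_columns_orthonormal in \<open>auto simp: harmonic_frame_def\<close>)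

lemma ip_harmonic_frame_self: "ip (harmonic_frame n N i) (harmonic_frame n N i) = of_nat n / of_nat N"
proof -
  have "dft_entry N i k * cnj (dft_entry N i k) = 1 / of_nat N" for k
    unfolding dft_entry_def
    by (simp add: cis_cnj cis_mult power2_eq_square[symmetric] of_real_sqrt_of_nat_sq)
  thus ?thesis by (simp add: ip_def harmonic_frame_def)
qed


subsection \<open>Inner products and the operators \<open>E\<^sub>\<Lambda>\<close>\<close>

lemma ip_add_left: "f \<in> carrier_vec n \<Longrightarrow> g \<in> carrier_vec n \<Longrightarrow> ip (f + g) h = ip f h + ip g h"
  unfolding ip_def by (simp add: sum.distrib algebra_simps)

lemma ip_smult_left: "f \<in> carrier_vec n \<Longrightarrow> ip (a \<cdot>\<^sub>v f) h = a * ip f h"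
  unfolding ip_def by (simp add: sum_distrib_left algebra_simps)

lemma ip_zero_left: "ip (0\<^sub>v n) h = 0"
  unfolding ip_def by simp

lemma ip_swap: "dim_vec f = dim_vec g \<Longrightarrow> ip g f = cnj (ip f g)"
  unfolding ip_def by (simp add: mult.commute)

lemma ip_unit_vec_left: "ip (unit_vec n l) g = (if l < n then cnj (g $ l) else 0)"
proof -
  have "ip (unit_vec n l) g = (\<Sum>k<n. if k = l then cnj (g $ k) else 0)"
    unfolding ip_def by (intro sum.cong) (auto simp: unit_vec_def)
  thus ?thesis by (simp add: sum.delta)
qed

lemma smult_vec_eq_zero_vecD:
  fixes l :: "'a :: field"
  assumes "v \<in> carrier_vec n" and "l \<cdot>\<^sub>v v = 0\<^sub>v n" and "l \<noteq> 0"
  shows "v = 0\<^sub>v n"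
proof (rule eq_vecI)
  fix k assume "k < dim_vec (0\<^sub>v n :: 'a vec)"
  moreover from this have "l * v $ k = 0"
    using arg_cong[OF assms(2), of "\<lambda>w. w $ k"] assms(1) by simp
  ultimately show "v $ k = 0\<^sub>v n $ k" using assms(3) by simp
qed (use assms(1) in simp)

lemma E_op_carrier: "E_op n \<Lambda> F G \<in> carrier_mat n n"
  by (simp add: E_op_def)

lemma eigenvalue_E_op_iff:
  "eigenvalue (E_op n \<Lambda> F G) l \<longleftrightarrow> (\<exists>v \<in> carrier_vec n. v \<noteq> 0\<^sub>v n \<and> E_op n \<Lambda> F G *\<^sub>v v = l \<cdot>\<^sub>v v)"
  by (auto simp: eigenvalue_def eigenvector_def E_op_def)

lemma E_op_mult_vec:
  assumes "v \<in> carrier_vec n"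
  shows "E_op n \<Lambda> F G *\<^sub>v v = vec n (\<lambda>p. \<Sum>i\<in>\<Lambda>. ip v (F i) * G i $ p)"
proof (rule eq_vecI)
  fix p assume "p < dim_vec (vec n (\<lambda>p. \<Sum>i\<in>\<Lambda>. ip v (F i) * G i $ p))"
  hence p: "p < n" by simp
  have "(E_op n \<Lambda> F G *\<^sub>v v) $ p = (\<Sum>q<n. (\<Sum>i\<in>\<Lambda>. G i $ p * cnj (F i $ q)) * v $ q)"
    using p assms unfolding E_op_def by (simp add: scalar_prod_def lessThan_atLeast0)
  also have "\<dots> = (\<Sum>i\<in>\<Lambda>. (\<Sum>q<n. v $ q * cnj (F i $ q)) * G i $ p)"
    by (simp add: sum_distrib_left sum_distrib_right algebra_simps sum.swap[of _ \<Lambda>])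
  also have "\<dots> = (\<Sum>i\<in>\<Lambda>. ip v (F i) * G i $ p)" using assms by (simp add: ip_def)
  finally show "(E_op n \<Lambda> F G *\<^sub>v v) $ p = vec n (\<lambda>p. \<Sum>i\<in>\<Lambda>. ip v (F i) * G i $ p) $ p"
    using p by simp
qed (simp add: E_op_def)

lemma E_op_singleton_mult_vec:
  "v \<in> carrier_vec n \<Longrightarrow> G i \<in> carrier_vec n \<Longrightarrow> E_op n {i} F G *\<^sub>v v = ip v (F i) \<cdot>\<^sub>v G i"
  by (subst E_op_mult_vec) (auto intro!: eq_vecI)

lemma E_op_pair_mult_vec:
  assumes "v \<in> carrier_vec n" "G i \<in> carrier_vec n" "G j \<in> carrier_vec n" "i \<noteq> j"
  shows "E_op n {i, j} F G *\<^sub>v v = ip v (F i) \<cdot>\<^sub>v G i + ip v (F j) \<cdot>\<^sub>v G j"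
  by (subst E_op_mult_vec) (use assms in \<open>auto intro!: eq_vecI\<close>)

lemma spectral_radius_eq_Max_nonzero_eigenvalues:
  assumes A: "A \<in> carrier_mat n n" and n: "0 < n" and S: "finite S"
    and eigenvalues: "\<And>l. l \<noteq> 0 \<Longrightarrow> eigenvalue A l \<longleftrightarrow> l \<in> S"
  shows "spectral_radius A = Max (norm ` insert 0 S)"
proof -
  have fin: "finite (spectrum A)" by (rule card_finite_spectrum[OF A])
  obtain l0 where l0: "l0 \<in> spectrum A" using spectrum_non_empty[OF A n] by auto
  have S_spectrum: "l \<in> S \<Longrightarrow> l \<noteq> 0 \<Longrightarrow> l \<in> spectrum A" for l
    using eigenvalues by (simp add: spectrum_def)
  have spectrum_S: "l \<in> spectrum A \<Longrightarrow> l \<in> insert 0 S" for l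
    using eigenvalues by (cases "l = 0") (auto simp: spectrum_def)
  show ?thesis unfolding spectral_radius_def
  proof (rule antisym)
    show "Max (norm ` spectrum A) \<le> Max (norm ` insert 0 S)"
      by (intro Max_mono image_mono subsetI spectrum_S) (use l0 S in auto)
    have bound: "x \<le> Max (norm ` spectrum A)" if x: "x \<in> norm ` insert 0 S" for x
    proof -
      obtain l where l: "x = norm l" "l \<in> insert 0 S" using x by (rule imageE)
      show ?thesis
      proof (cases "l = 0")
        case True
        thus ?thesis using l order_trans[OF norm_ge_zero Max_ge[of "norm ` spectrum A" "norm l0"]] fin l0
          by simp
      next
        case False
        thus ?thesis using l S_spectrum fin by (intro Max_ge) auto
      qed
    qed
    show "Max (norm ` insert 0 S) \<le> Max (norm ` spectrum A)"
      using S by (intro Max.boundedI bound) auto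
  qed
qed

lemma eigenvalue_E_op_singleton_iff:
  assumes G: "G i \<in> carrier_vec n" and l: "l \<noteq> 0"
  shows "eigenvalue (E_op n {i} F G) l \<longleftrightarrow> l = ip (G i) (F i)"
proof
  assume "eigenvalue (E_op n {i} F G) l"
  then obtain v where v: "v \<in> carrier_vec n" "v \<noteq> 0\<^sub>v n" "E_op n {i} F G *\<^sub>v v = l \<cdot>\<^sub>v v"
    unfolding eigenvalue_E_op_iff by blast
  have eigen: "ip v (F i) \<cdot>\<^sub>v G i = l \<cdot>\<^sub>v v"
    using v(3) E_op_singleton_mult_vec[where F = F and G = G and i = i, OF v(1) G] by simp
  have "ip v (F i) \<noteq> 0"
  proof
    assume "ip v (F i) = 0"
    hence "l \<cdot>\<^sub>v v = 0 \<cdot>\<^sub>v G i" using eigen by simp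
    also have "\<dots> = 0\<^sub>v n" using G by (auto intro!: eq_vecI)
    finally show False using smult_vec_eq_zero_vecD[OF v(1) _ l] v(2) by blast
  qed
  moreover have "ip v (F i) * ip (G i) (F i) = l * ip v (F i)"
    using arg_cong[OF eigen, of "\<lambda>x. ip x (F i)"] ip_smult_left G v(1) by metis
  ultimately show "l = ip (G i) (F i)" by simp
next
  assume l_def: "l = ip (G i) (F i)"
  hence "G i \<noteq> 0\<^sub>v n" using l ip_zero_left by metis
  moreover have "E_op n {i} F G *\<^sub>v G i = l \<cdot>\<^sub>v G i"
    using E_op_singleton_mult_vec[where F = F and G = G and i = i, OF G G] l_def by simp
  ultimately show "eigenvalue (E_op n {i} F G) l" using G unfolding eigenvalue_E_op_iff by blast
qed

lemma eigenvalue_E_op_pair_iff: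
  assumes ij: "i \<noteq> j" and G: "G i \<in> carrier_vec n" "G j \<in> carrier_vec n"
    and diag: "ip (G i) (F i) = c" "ip (G j) (F j) = c" and l: "l \<noteq> 0"
  shows "eigenvalue (E_op n {i, j} F G) l \<longleftrightarrow>
    (\<exists>p q. (p \<noteq> 0 \<or> q \<noteq> 0) \<and> (l - c) * p = q * ip (G j) (F i) \<and> (l - c) * q = p * ip (G i) (F j))"
proof -
  define x y where "x = ip (G j) (F i)" and "y = ip (G i) (F j)"
  define w where "w p q = p \<cdot>\<^sub>v G i + q \<cdot>\<^sub>v G j" for p q
  have w_carrier: "w p q \<in> carrier_vec n" for p q using G by (simp add: w_def)
  have ip_w: "ip (w p q) (F i) = p * c + q * x" "ip (w p q) (F j) = p * y + q * c" for p q
    using G diag by (simp_all add: w_def ip_add_left[of _ n] ip_smult_left[of _ n] x_def y_def)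
  have E_op_w: "E_op n {i, j} F G *\<^sub>v v = w (ip v (F i)) (ip v (F j))" if "v \<in> carrier_vec n" for v
    using E_op_pair_mult_vec[OF that G ij] by (simp add: w_def)
  \<comment> \<open>On the span of \<open>g\<^sub>i, g\<^sub>j\<close>, \<open>E\<^sub>{\<^sub>i\<^sub>,\<^sub>j\<^sub>}\<close> acts on the coordinates \<open>(\<langle>v, f\<^sub>i\<rangle>, \<langle>v, f\<^sub>j\<rangle>)\<close> by the matrix \<open>[[c, x], [y, c]]\<close>.\<close>
  show ?thesis unfolding x_def[symmetric] y_def[symmetric]
  proof
    assume "eigenvalue (E_op n {i, j} F G) l"
    then obtain v where v: "v \<in> carrier_vec n" "v \<noteq> 0\<^sub>v n" "w (ip v (F i)) (ip v (F j)) = l \<cdot>\<^sub>v v"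
      unfolding eigenvalue_E_op_iff by (auto simp: E_op_w)
    define p q where "p = ip v (F i)" and "q = ip v (F j)"
    have "l * p = p * c + q * x" "l * q = p * y + q * c"
      using arg_cong[OF v(3), of "\<lambda>u. ip u (F i)"] arg_cong[OF v(3), of "\<lambda>u. ip u (F j)"]
      by (simp_all add: ip_w ip_smult_left[OF v(1)] p_def q_def)
    moreover have "p \<noteq> 0 \<or> q \<noteq> 0"
    proof (rule ccontr)
      assume "\<not> (p \<noteq> 0 \<or> q \<noteq> 0)"
      hence "l \<cdot>\<^sub>v v = 0 \<cdot>\<^sub>v G i + 0 \<cdot>\<^sub>v G j" using v(3) by (simp add: w_def p_def q_def)
      also have "\<dots> = 0\<^sub>v n" using G by (auto intro!: eq_vecI)
      finally show False using smult_vec_eq_zero_vecD[OF v(1) _ l] v(2) by blast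
    qed
    ultimately have "(p \<noteq> 0 \<or> q \<noteq> 0) \<and> (l - c) * p = q * x \<and> (l - c) * q = p * y"
      by (auto simp: algebra_simps)
    thus "\<exists>p q. (p \<noteq> 0 \<or> q \<noteq> 0) \<and> (l - c) * p = q * x \<and> (l - c) * q = p * y" by blast
  next
    assume "\<exists>p q. (p \<noteq> 0 \<or> q \<noteq> 0) \<and> (l - c) * p = q * x \<and> (l - c) * q = p * y"
    then obtain p q where pq: "p \<noteq> 0 \<or> q \<noteq> 0" "(l - c) * p = q * x" "(l - c) * q = p * y" by blast
    have ip_wpq: "ip (w p q) (F i) = l * p" "ip (w p q) (F j) = l * q"
      using ip_w pq by (simp_all add: algebra_simps)
    have "E_op n {i, j} F G *\<^sub>v w p q = l \<cdot>\<^sub>v w p q"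
      unfolding E_op_w[OF w_carrier] ip_wpq using G by (auto simp: w_def algebra_simps intro!: eq_vecI)
    moreover have "w p q \<noteq> 0\<^sub>v n" using ip_wpq ip_zero_left l pq(1) by (metis mult_eq_0_iff)
    ultimately show "eigenvalue (E_op n {i, j} F G) l" using w_carrier unfolding eigenvalue_E_op_iff by blast
  qed
qed

lemma nontrivial_solution_2x2_iff:
  fixes a x y :: "'a :: field"
  shows "(\<exists>p q. (p \<noteq> 0 \<or> q \<noteq> 0) \<and> a * p = q * x \<and> a * q = p * y) \<longleftrightarrow> a\<^sup>2 = x * y"
proof
  assume "\<exists>p q. (p \<noteq> 0 \<or> q \<noteq> 0) \<and> a * p = q * x \<and> a * q = p * y"
  then obtain p q where pq: "p \<noteq> 0 \<or> q \<noteq> 0" "a * p = q * x" "a * q = p * y" by blast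
  have "a\<^sup>2 * p = a * (a * p)" by (simp add: power2_eq_square)
  also have "\<dots> = x * (a * q)" unfolding pq(2) by (simp add: algebra_simps)
  also have "\<dots> = x * y * p" unfolding pq(3) by (simp add: algebra_simps)
  finally have p: "(a\<^sup>2 - x * y) * p = 0" by (simp add: algebra_simps)
  have "a\<^sup>2 * q = a * (a * q)" by (simp add: power2_eq_square)
  also have "\<dots> = y * (a * p)" unfolding pq(3) by (simp add: algebra_simps)
  also have "\<dots> = x * y * q" unfolding pq(2) by (simp add: algebra_simps)
  finally have q: "(a\<^sup>2 - x * y) * q = 0" by (simp add: algebra_simps)
  show "a\<^sup>2 = x * y" using p q pq(1) by auto
next
  assume sq: "a\<^sup>2 = x * y"
  show "\<exists>p q. (p \<noteq> 0 \<or> q \<noteq> 0) \<and> a * p = q * x \<and> a * q = p * y"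
  proof (cases "x = 0")
    case True
    thus ?thesis using sq by (intro exI[of _ 0] exI[of _ 1]) simp
  next
    case False
    thus ?thesis using sq by (intro exI[of _ x] exI[of _ a]) (simp add: power2_eq_square algebra_simps)
  qed
qed

lemma spectral_radius_E_op_singleton:
  assumes "0 < n" and "G i \<in> carrier_vec n"
  shows "spectral_radius (E_op n {i} F G) = cmod (ip (G i) (F i))"
proof -
  have "spectral_radius (E_op n {i} F G) = Max (norm ` insert 0 {ip (G i) (F i)})"
    using assms eigenvalue_E_op_singleton_iff[of G i n _ F]
    by (intro spectral_radius_eq_Max_nonzero_eigenvalues[OF E_op_carrier]) auto
  thus ?thesis by simp
qed

lemma spectral_radius_E_op_pair:
  assumes "0 < n" and ij: "i \<noteq> j" and G: "G i \<in> carrier_vec n" "G j \<in> carrier_vec n"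
    and diag: "ip (G i) (F i) = c" "ip (G j) (F j) = c"
    and s: "s\<^sup>2 = ip (G j) (F i) * ip (G i) (F j)"
  shows "spectral_radius (E_op n {i, j} F G) = max (cmod (c + s)) (cmod (c - s))"
proof -
  have eigenvalues: "eigenvalue (E_op n {i, j} F G) l \<longleftrightarrow> l \<in> {c + s, c - s}" if "l \<noteq> 0" for l
  proof -
    have "(l - c)\<^sup>2 = s\<^sup>2 \<longleftrightarrow> (l - (c + s)) * (l - (c - s)) = 0"
      by (simp add: power2_eq_square algebra_simps)
    thus ?thesis
      unfolding eigenvalue_E_op_pair_iff[OF ij G diag that] nontrivial_solution_2x2_iff s[symmetric]
      by auto
  qed
  have "spectral_radius (E_op n {i, j} F G) = Max (norm ` insert 0 {c + s, c - s})"
    by (rule spectral_radius_eq_Max_nonzero_eigenvalues[OF E_op_carrier assms(1) _ eigenvalues]) simp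
  thus ?thesis by (simp add: max_def)
qed


subsection \<open>Traces of dual pairs\<close>

lemma dual_pair_carrier:
  assumes "dual_pair n N F G" and "i < N"
  shows "F i \<in> carrier_vec n" and "G i \<in> carrier_vec n"
  using assms by (simp_all add: dual_pair_def is_frame_def)

lemma dual_pair_dim_vec:
  assumes "dual_pair n N F G" and "i < N"
  shows "dim_vec (F i) = n" and "dim_vec (G i) = n"
  using dual_pair_carrier[OF assms] by auto

lemma dual_pair_resolution_of_identity:
  assumes d: "dual_pair n N F G" and k: "k < n" and l: "l < n"
  shows "(\<Sum>i<N. F i $ k * cnj (G i $ l)) = (if k = l then 1 else 0)"
proof -
  have "unit_vec n l = finsum_vec TYPE(complex) n (\<lambda>i. ip (unit_vec n l) (G i) \<cdot>\<^sub>v F i) {..<N}"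
    using d l unfolding dual_pair_def by auto
  hence "unit_vec n l $ k = finsum_vec TYPE(complex) n (\<lambda>i. ip (unit_vec n l) (G i) \<cdot>\<^sub>v F i) {..<N} $ k"
    by simp
  also have "\<dots> = (\<Sum>i<N. ip (unit_vec n l) (G i) * F i $ k)"
    by (rule index_finsum_vec_smult[OF dual_pair_carrier(1)[OF d] k])
  also have "\<dots> = (\<Sum>i<N. F i $ k * cnj (G i $ l))"
    using l by (intro sum.cong) (auto simp: ip_unit_vec_left dual_pair_dim_vec[OF d])
  finally show ?thesis using k l by simp
qed

lemma sum_ip_dual_pair:
  assumes d: "dual_pair n N F G"
  shows "(\<Sum>i<N. ip (F i) (G i)) = of_nat n"
proof -
  have "(\<Sum>i<N. ip (F i) (G i)) = (\<Sum>i<N. \<Sum>k<n. F i $ k * cnj (G i $ k))"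
    by (intro sum.cong) (auto simp: ip_def dual_pair_dim_vec[OF d])
  also have "\<dots> = (\<Sum>k<n. \<Sum>i<N. F i $ k * cnj (G i $ k))" by (rule sum.swap)
  also have "\<dots> = (\<Sum>k<n. 1)" by (intro sum.cong) (auto simp: dual_pair_resolution_of_identity[OF d])
  finally show ?thesis by simp
qed

definition cross_term :: "(nat \<Rightarrow> complex vec) \<Rightarrow> (nat \<Rightarrow> complex vec) \<Rightarrow> nat \<Rightarrow> nat \<Rightarrow> complex" where
  "cross_term F G i j = ip (F i) (G j) * ip (F j) (G i)"

lemma sum_cross_term_dual_pair:
  assumes d: "dual_pair n N F G"
  shows "(\<Sum>i<N. \<Sum>j<N. cross_term F G i j) = of_nat n"
proof -
  define D where "D k l = (\<Sum>i<N. F i $ k * cnj (G i $ l))" for k l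
  define T where "T i j k l = (F i $ k * cnj (G i $ l)) * (F j $ l * cnj (G j $ k))" for i j k l
  have "(\<Sum>i<N. \<Sum>j<N. cross_term F G i j) = (\<Sum>i<N. \<Sum>j<N. \<Sum>k<n. \<Sum>l<n. T i j k l)"
    by (intro sum.cong refl)
      (simp add: cross_term_def ip_def dual_pair_dim_vec[OF d] sum_product T_def algebra_simps)
  also have "\<dots> = (\<Sum>i<N. \<Sum>k<n. \<Sum>j<N. \<Sum>l<n. T i j k l)"
    by (intro sum.cong refl sum.swap)
  also have "\<dots> = (\<Sum>i<N. \<Sum>k<n. \<Sum>l<n. \<Sum>j<N. T i j k l)"
    by (intro sum.cong refl sum.swap)
  also have "\<dots> = (\<Sum>k<n. \<Sum>i<N. \<Sum>l<n. \<Sum>j<N. T i j k l)"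
    by (rule sum.swap)
  also have "\<dots> = (\<Sum>k<n. \<Sum>l<n. \<Sum>i<N. \<Sum>j<N. T i j k l)"
    by (intro sum.cong refl sum.swap)
  also have "\<dots> = (\<Sum>k<n. \<Sum>l<n. D k l * D l k)"
    by (simp add: D_def T_def sum_product)
  also have "\<dots> = (\<Sum>k<n. \<Sum>l<n. if k = l then 1 else 0)"
    unfolding D_def by (intro sum.cong refl) (auto simp: dual_pair_resolution_of_identity[OF d])
  finally show ?thesis by simp
qed


subsection \<open>Pairs optimal for \<open>r\<^sup>(\<^sup>1\<^sup>)\<close>\<close>

lemma r_m_1_eq_Max:
  assumes "0 < n" and "\<And>i. i < N \<Longrightarrow> G i \<in> carrier_vec n"
  shows "r_m 1 n N F G = Max ((\<lambda>i. cmod (ip (G i) (F i))) ` {..<N})"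
proof -
  have singletons: "subsets_m N 1 = (\<lambda>i. {i}) ` {..<N}"
    by (auto simp: subsets_m_def card_1_singleton_iff)
  have "r_m 1 n N F G = Max ((\<lambda>i. spectral_radius (E_op n {i} F G)) ` {..<N})"
    unfolding r_m_def singletons image_image ..
  also have "\<dots> = Max ((\<lambda>i. cmod (ip (G i) (F i))) ` {..<N})"
    using assms by (intro arg_cong[where f = Max] image_cong refl) (simp add: spectral_radius_E_op_singleton)
  finally show ?thesis .
qed

lemma norm_ip_le_r_m_1:
  assumes d: "dual_pair n N F G" and "0 < n" and i: "i < N"
  shows "cmod (ip (F i) (G i)) \<le> r_m 1 n N F G"
proof -
  have "cmod (ip (F i) (G i)) = cmod (ip (G i) (F i))"
    using dual_pair_dim_vec[OF d i] by (simp add: ip_swap[of "G i" "F i"])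
  also have "\<dots> \<le> Max ((\<lambda>i. cmod (ip (G i) (F i))) ` {..<N})" using i by (intro Max_ge) auto
  also have "\<dots> = r_m 1 n N F G" using r_m_1_eq_Max[OF assms(2) dual_pair_carrier(2)[OF d]] by simp
  finally show ?thesis .
qed

lemma r_m_1_ge:
  assumes d: "dual_pair n N F G" and "0 < n" and "0 < N"
  shows "real n / real N \<le> r_m 1 n N F G"
proof -
  have "real n = cmod (\<Sum>i<N. ip (F i) (G i))" unfolding sum_ip_dual_pair[OF d] by simp
  also have "\<dots> \<le> (\<Sum>i<N. cmod (ip (F i) (G i)))" by (rule norm_sum)
  also have "\<dots> \<le> (\<Sum>i<N. r_m 1 n N F G)" using norm_ip_le_r_m_1[OF d assms(2)] by (intro sum_mono) auto
  finally show ?thesis using assms(3) by (simp add: field_simps)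
qed

lemma r1_inf_eq:
  assumes "0 < n" and "n \<le> N"
  shows "r1_inf n N = real n / real N"
  unfolding r1_inf_def
proof (rule cInf_eq_minimum)
  let ?P = "harmonic_frame n N"
  have "r_m 1 n N ?P ?P = Max ((\<lambda>i. cmod (ip (?P i) (?P i))) ` {..<N})"
    using assms(1) by (rule r_m_1_eq_Max) (simp add: harmonic_frame_def)
  also have "\<dots> = real n / real N"
    using assms by (simp add: ip_harmonic_frame_self norm_divide image_constant[of 0])
  finally show "real n / real N \<in> {r_m 1 n N F G |F G. dual_pair n N F G}"
    using harmonic_frame_dual_pair[OF assms(2)] by force
next
  fix x assume "x \<in> {r_m 1 n N F G |F G. dual_pair n N F G}"
  thus "real n / real N \<le> x" using r_m_1_ge assms by fastforce
qed

lemma R1_ip_diag: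
  assumes R: "(F, G) \<in> R1 n N" and "0 < n" "n \<le> N" and i: "i < N"
  shows "ip (F i) (G i) = of_real (real n / real N)"
proof -
  have d: "dual_pair n N F G" and r1: "r_m 1 n N F G = real n / real N"
    using R r1_inf_eq[OF assms(2,3)] by (auto simp: R1_def)
  have norm_le: "cmod (ip (F j) (G j)) \<le> real n / real N" if "j < N" for j
    using norm_ip_le_r_m_1[OF d assms(2) that] r1 by simp
  have "(\<Sum>j<N. Re (ip (F j) (G j))) = real (card {..<N}) * (real n / real N)"
    using arg_cong[OF sum_ip_dual_pair[OF d], of Re] assms(2,3) by (simp add: Re_sum)
  hence "Re (ip (F i) (G i)) = real n / real N"
    using i order_trans[OF complex_Re_le_cmod norm_le]
    by (intro sum_eq_card_mult_bound_imp_eq[of "{..<N}" "\<lambda>j. Re (ip (F j) (G j))"]) auto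
  thus ?thesis using norm_le[OF i] by (rule complex_eq_of_real_if_Re_eq_norm_le)
qed


subsection \<open>The second spectral number of optimal pairs\<close>

definition offdiag :: "nat \<Rightarrow> (nat \<times> nat) set" where
  "offdiag N = (SIGMA i:{..<N}. {..<N} - {i})"

lemma mem_offdiag_iff [simp]: "(i, j) \<in> offdiag N \<longleftrightarrow> i < N \<and> j < N \<and> i \<noteq> j"
  by (auto simp: offdiag_def)

lemma finite_offdiag: "finite (offdiag N)"
  by (simp add: offdiag_def)

lemma card_offdiag: "card (offdiag N) = N * (N - 1)"
  by (simp add: offdiag_def)

lemma subsets_m_2_eq: "subsets_m N 2 = (\<lambda>(i, j). {i, j}) ` offdiag N"
proof (rule Set.set_eqI)
  fix \<Lambda>
  show "\<Lambda> \<in> subsets_m N 2 \<longleftrightarrow> \<Lambda> \<in> (\<lambda>(i, j). {i, j}) ` offdiag N"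
  proof
    assume "\<Lambda> \<in> subsets_m N 2"
    then obtain i j where "i \<noteq> j" "\<Lambda> = {i, j}" "\<Lambda> \<subseteq> {..<N}"
      by (auto simp: subsets_m_def card_2_iff)
    thus "\<Lambda> \<in> (\<lambda>(i, j). {i, j}) ` offdiag N" by (auto intro!: image_eqI[where x = "(i, j)"])
  qed (auto simp: subsets_m_def)
qed

lemma r_m_2_eq_Max_offdiag:
  "r_m 2 n N F G = Max ((\<lambda>(i, j). spectral_radius (E_op n {i, j} F G)) ` offdiag N)"
  unfolding r_m_def subsets_m_2_eq by (simp add: image_image case_prod_beta)

locale optimal_dual_pair =
  fixes n N :: nat and F G :: "nat \<Rightarrow> complex vec"
  assumes n_pos: "0 < n" and n_less_N: "n < N" and optimal: "(F, G) \<in> R1 n N"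
begin

abbreviation c :: real where "c \<equiv> real n / real N"

abbreviation t :: real where "t \<equiv> sqrt (real n * (real N - real n) / ((real N)\<^sup>2 * (real N - 1)))"

lemma dual: "dual_pair n N F G"
  using optimal by (simp add: R1_def)

lemma c_pos: "0 < c"
  using n_pos n_less_N by simp

lemma t_nonneg: "0 \<le> t"
  using n_less_N by simp

lemma ip_diag: "i < N \<Longrightarrow> ip (F i) (G i) = of_real c"
  using R1_ip_diag[OF optimal n_pos less_imp_le[OF n_less_N]] by simp

lemma ip_diag_swap: "i < N \<Longrightarrow> ip (G i) (F i) = of_real c"
  using ip_diag dual_pair_dim_vec[OF dual] by (simp add: ip_swap[of "F i" "G i"])

lemma sum_cross_term_offdiag:
  "(\<Sum>(i, j)\<in>offdiag N. cross_term F G i j) = of_real (real (card (offdiag N)) * t\<^sup>2)"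
proof -
  have "cross_term F G i i = of_real (c\<^sup>2)" if "i < N" for i
    using ip_diag[OF that] by (simp add: cross_term_def power2_eq_square)
  hence "(\<Sum>j<N. cross_term F G i j) = of_real (c\<^sup>2) + (\<Sum>j\<in>{..<N} - {i}. cross_term F G i j)"
    if "i < N" for i
    using that by (simp add: sum.remove[of "{..<N}" i])
  hence "of_nat n = (\<Sum>i<N. of_real (c\<^sup>2) + (\<Sum>j\<in>{..<N} - {i}. cross_term F G i j))"
    unfolding sum_cross_term_dual_pair[OF dual, symmetric] by (intro sum.cong) simp_all
  also have "\<dots> = of_real (real N * c\<^sup>2) + (\<Sum>(i, j)\<in>offdiag N. cross_term F G i j)"
    by (simp add: sum.distrib offdiag_def sum.Sigma)
  finally have "(\<Sum>(i, j)\<in>offdiag N. cross_term F G i j) = of_real (real n - real N * c\<^sup>2)"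
    by (simp add: algebra_simps)
  also have "real n - real N * c\<^sup>2 = real (card (offdiag N)) * t\<^sup>2"
    using n_pos n_less_N by (simp add: card_offdiag of_nat_diff power2_eq_square field_simps)
  finally show ?thesis .
qed

lemma spectral_radius_pair:
  assumes ij: "(i, j) \<in> offdiag N" and s: "s\<^sup>2 = cross_term F G i j"
  shows "spectral_radius (E_op n {i, j} F G) = max (cmod (of_real c + s)) (cmod (of_real c - s))"
proof -
  have "(cnj s)\<^sup>2 = ip (G j) (F i) * ip (G i) (F j)"
    using ij arg_cong[OF s, of cnj]
    by (simp add: cross_term_def ip_swap[of "F i" "G j"] ip_swap[of "F j" "G i"] dual_pair_dim_vec[OF dual])
  hence "spectral_radius (E_op n {i, j} F G) = max (cmod (of_real c + cnj s)) (cmod (of_real c - cnj s))"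
    using ij dual_pair_carrier[OF dual] ip_diag_swap
    by (intro spectral_radius_E_op_pair[OF n_pos]) auto
  moreover have "cmod (of_real c + cnj s) = cmod (of_real c + s)" "cmod (of_real c - cnj s) = cmod (of_real c - s)"
    by (metis complex_cnj_add complex_cnj_diff complex_cnj_complex_of_real complex_mod_cnj)+
  ultimately show ?thesis by simp
qed

lemma two_uniform_if_r_m_2_eq:
  assumes r2: "r_m 2 n N F G = c + t"
  shows "two_uniform N F G"
proof -
  have cross_le: "Re (cross_term F G i j) \<le> t\<^sup>2"
    and cross_eq: "Re (cross_term F G i j) = t\<^sup>2 \<Longrightarrow> cross_term F G i j = of_real (t\<^sup>2)"
    if ij: "(i, j) \<in> offdiag N" for i j
  proof -
    define s where "s = csqrt (cross_term F G i j)"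
    have s_sq: "s\<^sup>2 = cross_term F G i j" by (simp add: s_def)
    have "spectral_radius (E_op n {i, j} F G) \<le> c + t"
      unfolding r2[symmetric] r_m_2_eq_Max_offdiag
      by (intro Max_ge finite_imageI finite_offdiag image_eqI[where x = "(i, j)"]) (use ij in simp_all)
    hence "max (cmod (of_real c + s)) (cmod (of_real c - s)) \<le> c + t"
      using spectral_radius_pair[OF ij s_sq] by simp
    note bound = Re_sq_le_if_max_norm_add_diff_le[OF c_pos t_nonneg this, unfolded s_sq]
    show "Re (cross_term F G i j) \<le> t\<^sup>2" by (rule bound(1))
    show "Re (cross_term F G i j) = t\<^sup>2 \<Longrightarrow> cross_term F G i j = of_real (t\<^sup>2)" by (rule bound(2))
  qed
  have Re_sum: "(\<Sum>(i, j)\<in>offdiag N. Re (cross_term F G i j)) = real (card (offdiag N)) * t\<^sup>2"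
    using arg_cong[OF sum_cross_term_offdiag, of Re] by (simp add: Re_sum case_prod_beta)
  have "cross_term F G i j = of_real (t\<^sup>2)" if ij: "(i, j) \<in> offdiag N" for i j
  proof (rule cross_eq[OF ij])
    have "(\<lambda>(i, j). Re (cross_term F G i j)) (i, j) = t\<^sup>2"
      by (rule sum_eq_card_mult_bound_imp_eq[OF finite_offdiag _ Re_sum ij])
        (auto simp: case_prod_beta intro!: cross_le)
    thus "Re (cross_term F G i j) = t\<^sup>2" by simp
  qed
  moreover have "\<forall>i<N. ip (F i) (G i) = of_real c" using ip_diag by blast
  ultimately show ?thesis unfolding two_uniform_def one_uniform_def cross_term_def by auto
qed

lemma r_m_2_eq_if_two_uniform:
  assumes "two_uniform N F G"
  shows "r_m 2 n N F G = c + t"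
proof -
  obtain d where d: "\<And>i j. (i, j) \<in> offdiag N \<Longrightarrow> cross_term F G i j = d"
    using assms by (auto simp: two_uniform_def cross_term_def)
  have "of_nat (card (offdiag N)) * d = of_real (real (card (offdiag N)) * t\<^sup>2)"
    using sum_cross_term_offdiag d by (simp add: case_prod_beta cong: sum.cong)
  moreover have "card (offdiag N) \<noteq> 0" using n_pos n_less_N by (simp add: card_offdiag)
  ultimately have d_eq: "d = of_real (t\<^sup>2)" by simp
  have "spectral_radius (E_op n {i, j} F G) = c + t" if ij: "(i, j) \<in> offdiag N" for i j
  proof -
    have "(of_real t)\<^sup>2 = cross_term F G i j" using d[OF ij] d_eq by simp
    from spectral_radius_pair[OF ij this] show ?thesis
      using max_norm_add_diff_of_real[OF c_pos t_nonneg] by simp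
  qed
  moreover have "(0, 1) \<in> offdiag N" using n_pos n_less_N by simp
  ultimately have "(\<lambda>(i, j). spectral_radius (E_op n {i, j} F G)) ` offdiag N = {c + t}"
    by (auto intro!: image_eqI[where x = "(0, 1)"])
  thus ?thesis by (simp add: r_m_2_eq_Max_offdiag)
qed

end

theorem mainTheorem12:
  fixes n N :: nat and F G :: "nat \<Rightarrow> complex vec"
  assumes "0 < n" and "n < N"
    and "(F, G) \<in> R1 n N"
  shows "r_m 2 n N F G = real n / real N + sqrt (real n * (real N - real n) / ((real N)\<^sup>2 * (real N - 1)))
         \<longleftrightarrow> two_uniform N F G"
proof -
  interpret optimal_dual_pair n N F G
    using assms by unfold_locales
  show ?thesis using two_uniform_if_r_m_2_eq r_m_2_eq_if_two_uniform by blast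
qed

end
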